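(* Let $N\ge 1$, let $A\in\{0,1\}^{N\times N}$ be the symmetric adjacency matrix of an undirected graph (the top layer) and let $L\in\mathbb{R}^{N\times N}$ be the (symmetric) Laplacian matrix of an undirected graph (the bottom layer) on the node set $[N]=\{1,\dots,N\}$. Let $K=\mathrm{diag}(\kappa_1,\dots,\kappa_N)$ with each $\kappa_i\in\{0,1\}$. Let $\mathcal{G}_{\mathfrak{T}}$ be the group of $N\times N$ permutation matrices $P$ with $PA=AP$, let $\mathcal{G}_{\mathfrak{B}}$ be the group of $N\times N$ permutation matrices $P$ with $PL=LP$, and let $$\mathcal{G}=\Big\{\begin{pmatrix}P_{\mathfrak{T}}&0\\0&P_{\mathfrak{B}}\end{pmatrix}: P_{\mathfrak{T}}\in\mathcal{G}_{\mathfrak{T}},\ P_{\mathfrak{B}}\in\mathcal{G}_{\mathfrak{B}},\ P_{\mathfrak{B}}K=KP_{\mathfrak{T}}\Big\}.$$ Let $\{\mathcal{K}_{\mathfrak{T}}^j\}_{j=1}^{k_{\mathfrak{T}}}$ and $\{\mathcal{K}_{\mathfrak{B}}^l\}_{l=1}^{k_{\mathfrak{B}}}$ be the partitions of $[N]$ into orbits of $\mathcal{G}$ acting (through the $P_{\mathfrak{T}}$ block, respectively the $P_{\mathfrak{B}}$ block) on $[N]$. Let $E_{\mathfrak{T}}\in\mathbb{R}^{N\times k_{\mathfrak{T}}}$ be the matrix with $(E_{\mathfrak{T}})_{ij}=1$ if $i\in\mathcal{K}_{\mathfrak{T}}^j$ and $0$ otherwise, and similarly $E_{\mathfrak{B}}\in\mathbb{R}^{N\times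 k_{\mathfrak{B}}}$; let $\Pi_{\mathfrak{T}}=E_{\mathfrak{T}}(E_{\mathfrak{T}}^*E_{\mathfrak{T}})^{-1}E_{\mathfrak{T}}^*$ and $\Pi_{\mathfrak{B}}=E_{\mathfrak{B}}(E_{\mathfrak{B}}^*E_{\mathfrak{B}})^{-1}E_{\mathfrak{B}}^*$ be the orthogonal projections onto the column spaces of $E_{\mathfrak{T}}$ and $E_{\mathfrak{B}}$. Let $\{v_{\mathfrak{T}}^i\}_{i\in[N]}$ and $\{v_{\mathfrak{B}}^i\}_{i\in[N]}$ be orthonormal eigenbases of $\Pi_{\mathfrak{T}}$ and $\Pi_{\mathfrak{B}}$, ordered so that $v_{\mathfrak{T}}^1,\dots,v_{\mathfrak{T}}^{k_{\mathfrak{T}}}$ span the column space of $E_{\mathfrak{T}}$ and $v_{\mathfrak{B}}^1,\dots,v_{\mathfrak{B}}^{k_{\mathfrak{B}}}$ span the column space of $E_{\mathfrak{B}}$ (the remaining vectors spanning the respective kernels), and set $T_{\mathfrak{T}}=[v_{\mathfrak{T}}^1,\dots,v_{\mathfrak{T}}^N]$, $T_{\mathfrak{B}}=[v_{\mathfrak{B}}^1,\dots,v_{\mathfrak{B}}^N]$. Then $B=T_{\mathfrak{T}}^*AT_{\mathfrak{T}}$ and $M=T_{\mathfrak{B}}^*LT_{\mathfrak{B}}$ are block-diagonal, $$B=\begin{pmatrix}B^{\parallel}&0\\0&B^{\perp}\end{pmatrix},\qquad M=\begin{pmatrix}M^{\parallel}&0\\0&M^{\perp}\end{pmatrix},$$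 with $B^{\parallel}\in\mathbb{R}^{k_{\mathfrak{T}}\times k_{\mathfrak{T}}}$, $B^{\perp}\in\mathbb{R}^{(N-k_{\mathfrak{T}})\times(N-k_{\mathfrak{T}})}$, $M^{\parallel}\in\mathbb{R}^{k_{\mathfrak{B}}\times k_{\mathfrak{B}}}$, $M^{\perp}\in\mathbb{R}^{(N-k_{\mathfrak{B}})\times(N-k_{\mathfrak{B}})}$.
   Context: This concerns a duplex network of two layers on the same node set $[N]$: a top layer with adjacency matrix $A$ and a bottom layer with Laplacian $L$, with directed one-to-one inter-layer links from top node $i$ to bottom node $i$ present exactly when $\kappa_i=1$. The sets $\mathcal{K}_{\mathfrak{T}}^j$, $\mathcal{K}_{\mathfrak{B}}^l$ are called the clusters of the top and bottom layer. $E^*$ denotes the transpose. *)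

theory Defs
  imports "Jordan_Normal_Form.Gauss_Jordan_Elimination"
begin

text \<open>Matrices are Jordan_Normal_Form matrices over the reals, indices 0..N-1.\<close>

definition is_perm_mat :: "nat \<Rightarrow> real mat \<Rightarrow> bool" where
  "is_perm_mat N P \<longleftrightarrow> P \<in> carrier_mat N N \<and>
     (\<forall>i<N. \<forall>j<N. P $$ (i,j) = 0 \<or> P $$ (i,j) = 1) \<and>
     (\<forall>i<N. \<exists>!j. j < N \<and> P $$ (i,j) = 1) \<and>
     (\<forall>j<N. \<exists>!i. i < N \<and> P $$ (i,j) = 1)"

definition laplacian :: "nat \<Rightarrow> real mat \<Rightarrow> real mat" where
  "laplacian N W = mat N N (\<lambda>(i,j). if i = j then (\<Sum>k<N. W $$ (i,k)) - W $$ (i,i) else - W $$ (i,j))"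

definition diag_K :: "nat \<Rightarrow> (nat \<Rightarrow> real) \<Rightarrow> real mat" where
  "diag_K N \<kappa> = mat N N (\<lambda>(i,j). if i = j then \<kappa> i else 0)"

text \<open>The group G of pairs (P_T, P_B) (the block-diagonal matrices diag(P_T,P_B)).\<close>
definition sym_group :: "nat \<Rightarrow> real mat \<Rightarrow> real mat \<Rightarrow> real mat \<Rightarrow> (real mat \<times> real mat) set" where
  "sym_group N A L K = {(PT, PB). is_perm_mat N PT \<and> PT * A = A * PT \<and>
        is_perm_mat N PB \<and> PB * L = L * PB \<and> PB * K = K * PT}"

text \<open>Orbit of node i under the action of G through the top (resp. bottom) block:
  P e_i = e_j iff P(j,i) = 1.\<close>
definition orbit_top :: "nat \<Rightarrow> (real mat \<times> real mat) set \<Rightarrow> nat \<Rightarrow> nat set" where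
  "orbit_top N G i = {j. j < N \<and> (\<exists>(PT,PB)\<in>G. PT $$ (j,i) = 1)}"

definition orbit_bot :: "nat \<Rightarrow> (real mat \<times> real mat) set \<Rightarrow> nat \<Rightarrow> nat set" where
  "orbit_bot N G i = {j. j < N \<and> (\<exists>(PT,PB)\<in>G. PB $$ (j,i) = 1)}"

definition clusters_top :: "nat \<Rightarrow> (real mat \<times> real mat) set \<Rightarrow> nat set set" where
  "clusters_top N G = orbit_top N G ` {..<N}"

definition clusters_bot :: "nat \<Rightarrow> (real mat \<times> real mat) set \<Rightarrow> nat set set" where
  "clusters_bot N G = orbit_bot N G ` {..<N}"

definition cluster_mat :: "nat \<Rightarrow> nat \<Rightarrow> (nat \<Rightarrow> nat set) \<Rightarrow> real mat" where
  "cluster_mat N k c = mat N k (\<lambda>(i,j). if i \<in> c j then 1 else 0)"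

definition proj_mat :: "real mat \<Rightarrow> real mat" where
  "proj_mat E = E * the (mat_inverse (E\<^sup>T * E)) * E\<^sup>T"

definition col_space :: "real mat \<Rightarrow> real vec set" where
  "col_space M = {M *\<^sub>v c | c. c \<in> carrier_vec (dim_col M)}"

definition ker_space :: "real mat \<Rightarrow> real vec set" where
  "ker_space M = {v. v \<in> carrier_vec (dim_col M) \<and> M *\<^sub>v v = 0\<^sub>v (dim_row M)}"

definition cols_first :: "nat \<Rightarrow> real mat \<Rightarrow> real mat" where
  "cols_first k T = mat (dim_row T) k (\<lambda>(i,j). T $$ (i,j))"

definition cols_last :: "nat \<Rightarrow> real mat \<Rightarrow> real mat" where
  "cols_last k T = mat (dim_row T) (dim_col T - k) (\<lambda>(i,j). T $$ (i, j + k))"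

definition ordered_eigenbasis :: "nat \<Rightarrow> nat \<Rightarrow> real mat \<Rightarrow> real mat \<Rightarrow> real mat \<Rightarrow> bool" where
  "ordered_eigenbasis N k E Pr T \<longleftrightarrow> T \<in> carrier_mat N N \<and> T\<^sup>T * T = 1\<^sub>m N \<and>
     (\<forall>i<N. \<exists>c. Pr *\<^sub>v col T i = c \<cdot>\<^sub>v col T i) \<and>
     col_space (cols_first k T) = col_space E \<and>
     col_space (cols_last k T) = ker_space Pr"

definition block_diag_split :: "nat \<Rightarrow> nat \<Rightarrow> real mat \<Rightarrow> bool" where
  "block_diag_split N k B \<longleftrightarrow> (\<exists>B1 B2. B1 \<in> carrier_mat k k \<and> B2 \<in> carrier_mat (N-k) (N-k) \<and>
     B = four_block_mat B1 (0\<^sub>m k (N-k)) (0\<^sub>m (N-k) k) B2)"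

end

(*
  Both blocks of the statement come from one invariant subspace. The columns of the cluster
  indicator matrix E span exactly the vectors that are constant on the orbits of the symmetry
  group, i.e. the vectors fixed by all of its permutation matrices. A matrix X commuting with
  the group (A with the top components, L with the bottom ones) maps fixed vectors to fixed
  vectors, and so does X^T because the group is closed under transposition. Hence the span V of
  the first k columns of the orthogonal matrix T is invariant under X and X^T, and since the
  remaining columns of T are orthogonal to V, both off-diagonal blocks of T^T X T vanish.
*)

theory Submission
  imports Defs "HOL-Combinatorics.Permutations" "HOL-Library.Disjoint_Sets"
begin

section \<open>Permutation matrices\<close>

definition perm_matrix :: "nat \<Rightarrow> (nat \<Rightarrow> nat) \<Rightarrow> real mat" where
  "perm_matrix N \<sigma> = mat N N (\<lambda>(i,j). if i = \<sigma> j then 1 else 0)"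

lemma dim_perm_matrix [simp]:
  "dim_row (perm_matrix N \<sigma>) = N" "dim_col (perm_matrix N \<sigma>) = N"
  by (simp_all add: perm_matrix_def)

lemma perm_matrix_carrier [simp]: "perm_matrix N \<sigma> \<in> carrier_mat N N"
  by (simp add: carrier_matI)

lemma index_perm_matrix [simp]:
  "i < N \<Longrightarrow> j < N \<Longrightarrow> perm_matrix N \<sigma> $$ (i,j) = (if i = \<sigma> j then 1 else 0)"
  by (simp add: perm_matrix_def)

lemma perm_matrix_id: "perm_matrix N id = 1\<^sub>m N"
  by (auto simp: perm_matrix_def)

lemma perm_matrix_mult:
  assumes "\<tau> permutes {..<N}"
  shows "perm_matrix N \<sigma> * perm_matrix N \<tau> = perm_matrix N (\<sigma> \<circ> \<tau>)"
proof (rule eq_matI)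
  fix i j assume "i < dim_row (perm_matrix N (\<sigma> \<circ> \<tau>))" "j < dim_col (perm_matrix N (\<sigma> \<circ> \<tau>))"
  then have ij: "i < N" "j < N" by auto
  then have "\<tau> j < N" using assms permutes_in_image by fastforce
  have "(perm_matrix N \<sigma> * perm_matrix N \<tau>) $$ (i,j)
      = (\<Sum>m<N. (if i = \<sigma> m then 1 else 0) * (if m = \<tau> j then 1 else 0))"
    using ij by (simp add: scalar_prod_def atLeast0LessThan)
  also have "\<dots> = (\<Sum>m<N. if m = \<tau> j then (if i = \<sigma> (\<tau> j) then 1 else 0) else 0)"
    by (rule sum.cong) auto
  also have "\<dots> = (if i = \<sigma> (\<tau> j) then 1 else 0)"
    using \<open>\<tau> j < N\<close> by simp
  finally show "(perm_matrix N \<sigma> * perm_matrix N \<tau>) $$ (i,j) = perm_matrix N (\<sigma> \<circ> \<tau>) $$ (i,j)"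
    using ij by simp
qed auto

(* HOL-Algebra's syntax for inv hides Hilbert_Choice.inv. *)
lemma transpose_perm_matrix:
  assumes "\<sigma> permutes {..<N}"
  shows "(perm_matrix N \<sigma>)\<^sup>T = perm_matrix N (Hilbert_Choice.inv \<sigma>)"
  by (rule eq_matI) (auto simp: permutes_inverses[OF assms])

lemma perm_matrix_mult_vec:
  assumes "\<sigma> permutes {..<N}" "v \<in> carrier_vec N" "a < N"
  shows "(perm_matrix N \<sigma> *\<^sub>v v) $ \<sigma> a = v $ a"
proof -
  have "\<sigma> a < N" using assms permutes_in_image by fastforce
  moreover have "(\<sigma> a = \<sigma> m) = (m = a)" for m
    using permutes_inj[OF assms(1)] by (auto dest: injD)
  ultimately show ?thesis
    using assms by (simp add: scalar_prod_def atLeast0LessThan if_distrib[of "\<lambda>x. x * _"] sum.delta' cong: if_cong)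
qed

lemma is_perm_mat_perm_matrix:
  assumes "\<sigma> permutes {..<N}"
  shows "is_perm_mat N (perm_matrix N \<sigma>)"
proof -
  have row: "\<exists>!j. j < N \<and> perm_matrix N \<sigma> $$ (i,j) = 1" if "i < N" for i
  proof -
    have "\<exists>!j. j < N \<and> i = \<sigma> j"
      using that permutes_inverses[OF assms] permutes_in_image[OF permutes_inv[OF assms]]
      by (metis lessThan_iff)
    then show ?thesis
      using that by (smt (verit) index_perm_matrix)
  qed
  have col: "\<exists>!i. i < N \<and> perm_matrix N \<sigma> $$ (i,j) = 1" if "j < N" for j
  proof -
    have "\<sigma> j < N"
      using that permutes_in_image[OF assms] by simp
    then show ?thesis
      using that by (smt (verit) index_perm_matrix)
  qed
  show ?thesis
    unfolding is_perm_mat_def using row col by simp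
qed

lemma is_perm_mat_obtain_perm:
  assumes P: "is_perm_mat N P"
  obtains \<sigma> where "\<sigma> permutes {..<N}" "P = perm_matrix N \<sigma>"
proof -
  define \<sigma> where "\<sigma> j = (if j < N then THE i. i < N \<and> P $$ (i,j) = 1 else j)" for j
  have \<sigma>: "\<sigma> j < N \<and> P $$ (\<sigma> j, j) = 1" if "j < N" for j
    using theI'[of "\<lambda>i. i < N \<and> P $$ (i,j) = 1"] P that unfolding is_perm_mat_def \<sigma>_def by auto
  have "inj_on \<sigma> {..<N}"
  proof (rule inj_onI)
    fix j j' assume "j \<in> {..<N}" "j' \<in> {..<N}" "\<sigma> j = \<sigma> j'"
    then show "j = j'"
      using \<sigma> P unfolding is_perm_mat_def by (metis lessThan_iff)
  qed
  then have "bij_betw \<sigma> {..<N} {..<N}"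
    using \<sigma> endo_inj_surj[of "{..<N}" \<sigma>] by (auto simp: bij_betw_def)
  then have perm: "\<sigma> permutes {..<N}"
    by (rule bij_imp_permutes) (simp add: \<sigma>_def)
  have "P = perm_matrix N \<sigma>"
  proof (rule eq_matI)
    fix i j assume ij: "i < dim_row (perm_matrix N \<sigma>)" "j < dim_col (perm_matrix N \<sigma>)"
    then have "i < N" "j < N" by auto
    then show "P $$ (i,j) = perm_matrix N \<sigma> $$ (i,j)"
      using \<sigma>[of j] P unfolding is_perm_mat_def by (metis index_perm_matrix)
  qed (use P in \<open>auto simp: is_perm_mat_def\<close>)
  with perm show thesis by (rule that)
qed

lemma is_perm_mat_carrier: "is_perm_mat N P \<Longrightarrow> P \<in> carrier_mat N N"
  by (simp add: is_perm_mat_def)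

lemma is_perm_mat_row_one:
  assumes "is_perm_mat N P" "i < N"
  obtains a where "a < N" "P $$ (i,a) = 1"
  using assms unfolding is_perm_mat_def by auto

lemma is_perm_mat_one: "is_perm_mat N (1\<^sub>m N)"
  using is_perm_mat_perm_matrix[OF permutes_id] by (simp add: perm_matrix_id)

lemma is_perm_mat_mult:
  assumes "is_perm_mat N P" "is_perm_mat N Q"
  shows "is_perm_mat N (P * Q)"
proof -
  obtain \<sigma> \<tau> where "\<sigma> permutes {..<N}" "P = perm_matrix N \<sigma>" "\<tau> permutes {..<N}" "Q = perm_matrix N \<tau>"
    using assms by (meson is_perm_mat_obtain_perm)
  then show ?thesis
    by (simp add: perm_matrix_mult is_perm_mat_perm_matrix permutes_compose)
qed

lemma is_perm_mat_transpose:
  assumes "is_perm_mat N P"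
  shows "is_perm_mat N P\<^sup>T"
proof -
  obtain \<sigma> where "\<sigma> permutes {..<N}" "P = perm_matrix N \<sigma>"
    using assms by (rule is_perm_mat_obtain_perm)
  then show ?thesis
    by (simp add: transpose_perm_matrix is_perm_mat_perm_matrix permutes_inv)
qed

lemma perm_mat_orthogonal:
  assumes "is_perm_mat N P"
  shows "P * P\<^sup>T = 1\<^sub>m N" "P\<^sup>T * P = 1\<^sub>m N"
proof -
  obtain \<sigma> where \<sigma>: "\<sigma> permutes {..<N}" "P = perm_matrix N \<sigma>"
    using assms by (rule is_perm_mat_obtain_perm)
  show "P * P\<^sup>T = 1\<^sub>m N" "P\<^sup>T * P = 1\<^sub>m N"
    using \<sigma> by (simp_all add: transpose_perm_matrix perm_matrix_mult permutes_inv permutes_inv_o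
        perm_matrix_id)
qed

lemma intertwining_mult:
  assumes "P1 \<in> carrier_mat N N" "P2 \<in> carrier_mat N N" "Q1 \<in> carrier_mat N N" "Q2 \<in> carrier_mat N N"
    and "Y \<in> carrier_mat N N" "Q1 * Y = Y * P1" "Q2 * Y = Y * P2"
  shows "(Q1 * Q2) * Y = Y * (P1 * P2)"
proof -
  have "(Q1 * Q2) * Y = Q1 * (Y * P2)" using assms by (simp add: assoc_mult_mat[of Q1 N N Q2 N Y])
  also have "\<dots> = (Y * P1) * P2" using assms by (simp flip: assoc_mult_mat[of Q1 N N Y N P2])
  also have "\<dots> = Y * (P1 * P2)" using assms by (simp add: assoc_mult_mat[of Y N N P1 N P2])
  finally show ?thesis .
qed

lemma intertwining_transpose:
  assumes P: "is_perm_mat N P" and Q: "is_perm_mat N Q" and Y: "Y \<in> carrier_mat N N"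
    and "Q * Y = Y * P"
  shows "Q\<^sup>T * Y = Y * P\<^sup>T"
proof -
  have cP: "P \<in> carrier_mat N N" and cQ: "Q \<in> carrier_mat N N"
    using P Q by (simp_all add: is_perm_mat_def)
  have cPt: "P\<^sup>T \<in> carrier_mat N N" and cQt: "Q\<^sup>T \<in> carrier_mat N N"
    using cP cQ by simp_all
  have "Q\<^sup>T * Y = Q\<^sup>T * Y * (P * P\<^sup>T)"
    using cQ Y by (simp add: perm_mat_orthogonal(1)[OF P])
  also have "\<dots> = Q\<^sup>T * (Y * P) * P\<^sup>T"
    using assoc_mult_mat[OF mult_carrier_mat[OF cQt Y] cP cPt] assoc_mult_mat[OF cQt Y cP] by simp
  also have "\<dots> = (Q\<^sup>T * Q) * Y * P\<^sup>T"
    using assoc_mult_mat[OF cQt cQ Y] \<open>Q * Y = Y * P\<close> by simp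
  also have "\<dots> = Y * P\<^sup>T"
    using Y by (simp add: perm_mat_orthogonal(2)[OF Q])
  finally show ?thesis .
qed

lemma perm_mat_mult_vec_index:
  assumes P: "is_perm_mat N P" and "v \<in> carrier_vec N" "i < N" "a < N" "P $$ (i,a) = 1"
  shows "(P *\<^sub>v v) $ i = v $ a"
proof -
  obtain \<sigma> where \<sigma>: "\<sigma> permutes {..<N}" "P = perm_matrix N \<sigma>"
    using P by (rule is_perm_mat_obtain_perm)
  then have "i = \<sigma> a"
    using assms by (simp split: if_split_asm)
  then show ?thesis
    unfolding \<sigma>(2) using perm_matrix_mult_vec[OF \<sigma>(1) assms(2,4)] by simp
qed

section \<open>Orbits of a group of permutation matrices\<close>

definition perm_mat_group :: "nat \<Rightarrow> real mat set \<Rightarrow> bool" where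
  "perm_mat_group N S \<longleftrightarrow> (\<forall>P\<in>S. is_perm_mat N P) \<and> 1\<^sub>m N \<in> S \<and>
     (\<forall>P\<in>S. \<forall>Q\<in>S. P * Q \<in> S) \<and> (\<forall>P\<in>S. P\<^sup>T \<in> S)"

lemma perm_mat_groupD:
  assumes "perm_mat_group N S"
  shows "P \<in> S \<Longrightarrow> is_perm_mat N P" "1\<^sub>m N \<in> S"
    "P \<in> S \<Longrightarrow> Q \<in> S \<Longrightarrow> P * Q \<in> S" "P \<in> S \<Longrightarrow> P\<^sup>T \<in> S"
  using assms unfolding perm_mat_group_def by blast+

lemma one_mem_sym_group:
  assumes "A \<in> carrier_mat N N" "L \<in> carrier_mat N N" "K \<in> carrier_mat N N"
  shows "(1\<^sub>m N, 1\<^sub>m N) \<in> sym_group N A L K"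
  using assms is_perm_mat_one unfolding sym_group_def by auto

lemma sym_group_mult:
  assumes A: "A \<in> carrier_mat N N" and L: "L \<in> carrier_mat N N" and K: "K \<in> carrier_mat N N"
    and "(P1,Q1) \<in> sym_group N A L K" "(P2,Q2) \<in> sym_group N A L K"
  shows "(P1 * P2, Q1 * Q2) \<in> sym_group N A L K"
proof -
  have h: "is_perm_mat N P1" "is_perm_mat N P2" "is_perm_mat N Q1" "is_perm_mat N Q2"
    "P1 * A = A * P1" "Q1 * L = L * Q1" "Q1 * K = K * P1"
    "P2 * A = A * P2" "Q2 * L = L * Q2" "Q2 * K = K * P2"
    using assms(4,5) unfolding sym_group_def by simp_all
  note c = h(1-4)[THEN is_perm_mat_carrier]
  have "P1 * P2 * A = A * (P1 * P2)" "Q1 * Q2 * L = L * (Q1 * Q2)" "Q1 * Q2 * K = K * (P1 * P2)"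
    using intertwining_mult[OF c(1,2,1,2) A h(5,8)] intertwining_mult[OF c(3,4,3,4) L h(6,9)]
      intertwining_mult[OF c K h(7,10)] by simp_all
  then show ?thesis
    using is_perm_mat_mult[OF h(1,2)] is_perm_mat_mult[OF h(3,4)]
    unfolding sym_group_def mem_Collect_eq case_prod_conv by blast
qed

lemma sym_group_transpose:
  assumes A: "A \<in> carrier_mat N N" and L: "L \<in> carrier_mat N N" and K: "K \<in> carrier_mat N N"
    and "(P,Q) \<in> sym_group N A L K"
  shows "(P\<^sup>T, Q\<^sup>T) \<in> sym_group N A L K"
proof -
  have h: "is_perm_mat N P" "P * A = A * P" "is_perm_mat N Q" "Q * L = L * Q" "Q * K = K * P"
    using assms(4) unfolding sym_group_def by simp_all
  then show ?thesis
    using intertwining_transpose[OF h(1,1) A h(2)] intertwining_transpose[OF h(3,3) L h(4)]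
      intertwining_transpose[OF h(1,3) K h(5)] is_perm_mat_transpose
    unfolding sym_group_def mem_Collect_eq case_prod_conv by blast
qed

lemma perm_mat_group_sym_group:
  assumes "A \<in> carrier_mat N N" "L \<in> carrier_mat N N" "K \<in> carrier_mat N N"
  shows "perm_mat_group N (fst ` sym_group N A L K)" "perm_mat_group N (snd ` sym_group N A L K)"
proof -
  let ?G = "sym_group N A L K"
  have perm: "is_perm_mat N P" "is_perm_mat N Q" if "(P,Q) \<in> ?G" for P Q
    using that unfolding sym_group_def by simp_all
  note one = one_mem_sym_group[OF assms]
    and mult = sym_group_mult[OF assms]
    and transpose = sym_group_transpose[OF assms]
  show "perm_mat_group N (fst ` ?G)"
    unfolding perm_mat_group_def
  proof (intro conjI ballI)
    show "1\<^sub>m N \<in> fst ` ?G" using one by (rule rev_image_eqI) simp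
  next
    fix P assume "P \<in> fst ` ?G"
    then obtain Q where PQ: "(P,Q) \<in> ?G" by force
    show "is_perm_mat N P" using perm(1)[OF PQ] .
    show "P\<^sup>T \<in> fst ` ?G" using transpose[OF PQ] by (rule rev_image_eqI) simp
    fix P' assume "P' \<in> fst ` ?G"
    then obtain Q' where PQ': "(P',Q') \<in> ?G" by force
    show "P * P' \<in> fst ` ?G" using mult[OF PQ PQ'] by (rule rev_image_eqI) simp
  qed
  show "perm_mat_group N (snd ` ?G)"
    unfolding perm_mat_group_def
  proof (intro conjI ballI)
    show "1\<^sub>m N \<in> snd ` ?G" using one by (rule rev_image_eqI) simp
  next
    fix Q assume "Q \<in> snd ` ?G"
    then obtain P where PQ: "(P,Q) \<in> ?G" by force
    show "is_perm_mat N Q" using perm(2)[OF PQ] .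
    show "Q\<^sup>T \<in> snd ` ?G" using transpose[OF PQ] by (rule rev_image_eqI) simp
    fix Q' assume "Q' \<in> snd ` ?G"
    then obtain P' where PQ': "(P',Q') \<in> ?G" by force
    show "Q * Q' \<in> snd ` ?G" using mult[OF PQ PQ'] by (rule rev_image_eqI) simp
  qed
qed

definition orbit :: "nat \<Rightarrow> real mat set \<Rightarrow> nat \<Rightarrow> nat set" where
  "orbit N S i = {j. j < N \<and> (\<exists>P\<in>S. P $$ (j,i) = 1)}"

lemma orbit_top_eq: "orbit_top N G = orbit N (fst ` G)"
  unfolding orbit_top_def orbit_def by (rule ext) force

lemma orbit_bot_eq: "orbit_bot N G = orbit N (snd ` G)"
  unfolding orbit_bot_def orbit_def by (rule ext) force

lemma orbit_refl:
  assumes "perm_mat_group N S" "i < N"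
  shows "i \<in> orbit N S i"
  using perm_mat_groupD(2)[OF assms(1)] assms(2) unfolding orbit_def by force

lemma orbit_sym:
  assumes "perm_mat_group N S" "i < N" "j \<in> orbit N S i"
  shows "i \<in> orbit N S j"
proof -
  obtain P where "P \<in> S" "j < N" "P $$ (j,i) = 1"
    using assms(3) unfolding orbit_def by blast
  moreover have "P \<in> carrier_mat N N" "P\<^sup>T \<in> S"
    using perm_mat_groupD(1,4)[OF assms(1) \<open>P \<in> S\<close>] is_perm_mat_carrier by auto
  ultimately have "P\<^sup>T \<in> S" "P\<^sup>T $$ (i,j) = 1"
    using assms(2) by simp_all
  then show ?thesis
    using assms(2) unfolding orbit_def by blast
qed

lemma orbit_trans:
  assumes S: "perm_mat_group N S" and "i < N" "j \<in> orbit N S i" "l \<in> orbit N S j"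
  shows "l \<in> orbit N S i"
proof -
  obtain P Q where PQ: "P \<in> S" "j < N" "P $$ (j,i) = 1" "Q \<in> S" "l < N" "Q $$ (l,j) = 1"
    using assms(3,4) unfolding orbit_def by blast
  then have perm: "is_perm_mat N P" "is_perm_mat N Q"
    using perm_mat_groupD(1)[OF S] by auto
  have cP: "P \<in> carrier_mat N N" "Q \<in> carrier_mat N N"
    using perm is_perm_mat_carrier by auto
  have "(Q * P) $$ (l,i) = (Q *\<^sub>v col P i) $ l"
    using cP PQ \<open>i < N\<close> by simp
  also have "\<dots> = col P i $ j"
    using cP PQ by (intro perm_mat_mult_vec_index[OF perm(2)]) (simp_all add: carrier_vecI)
  also have "\<dots> = 1"
    using cP PQ \<open>i < N\<close> by simp
  finally have "(Q * P) $$ (l,i) = 1" .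
  moreover have "Q * P \<in> S"
    using perm_mat_groupD(3)[OF S] PQ by blast
  ultimately show ?thesis
    using PQ unfolding orbit_def by blast
qed

lemma orbit_eq:
  assumes "perm_mat_group N S" "i < N" "j \<in> orbit N S i"
  shows "orbit N S j = orbit N S i"
proof -
  have "j < N" using assms(3) unfolding orbit_def by simp
  show ?thesis
  proof
    show "orbit N S j \<subseteq> orbit N S i"
      using orbit_trans[OF assms] by blast
    show "orbit N S i \<subseteq> orbit N S j"
      using orbit_trans[OF assms(1) \<open>j < N\<close> orbit_sym[OF assms]] by blast
  qed
qed

lemma partition_on_orbits:
  assumes "perm_mat_group N S"
  shows "partition_on {..<N} (orbit N S ` {..<N})"
proof (rule partition_onI)
  show "\<Union> (orbit N S ` {..<N}) = {..<N}"
  proof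
    show "\<Union> (orbit N S ` {..<N}) \<subseteq> {..<N}" unfolding orbit_def by blast
    show "{..<N} \<subseteq> \<Union> (orbit N S ` {..<N})" using orbit_refl[OF assms] by blast
  qed
  show "{} \<notin> orbit N S ` {..<N}"
    using orbit_refl[OF assms] by blast
  show "disjnt B C" if BC: "B \<in> orbit N S ` {..<N}" "C \<in> orbit N S ` {..<N}" "B \<noteq> C" for B C
  proof -
    obtain a b where "a < N" "B = orbit N S a" "b < N" "C = orbit N S b"
      using BC by blast
    have "B \<inter> C = {}"
    proof (rule equals0I)
      fix x assume "x \<in> B \<inter> C"
      then have "orbit N S x = B" "orbit N S x = C"
        using orbit_eq[OF assms \<open>a < N\<close>, of x] orbit_eq[OF assms \<open>b < N\<close>, of x]
          \<open>B = orbit N S a\<close> \<open>C = orbit N S b\<close> by auto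
      with \<open>B \<noteq> C\<close> show False by simp
    qed
    then show ?thesis by (simp add: disjnt_def)
  qed
qed

section \<open>Vectors constant on clusters\<close>

definition blockwise_constant :: "nat \<Rightarrow> nat set set \<Rightarrow> real vec set" where
  "blockwise_constant N \<P> = {v \<in> carrier_vec N. \<forall>B\<in>\<P>. \<forall>a\<in>B. \<forall>b\<in>B. v $ a = v $ b}"

lemma blockwise_constantI:
  "v \<in> carrier_vec N \<Longrightarrow> (\<And>B a b. B \<in> \<P> \<Longrightarrow> a \<in> B \<Longrightarrow> b \<in> B \<Longrightarrow> v $ a = v $ b)
    \<Longrightarrow> v \<in> blockwise_constant N \<P>"
  unfolding blockwise_constant_def by blast

lemma blockwise_constantD:
  assumes "v \<in> blockwise_constant N \<P>"
  shows "v \<in> carrier_vec N" "B \<in> \<P> \<Longrightarrow> a \<in> B \<Longrightarrow> b \<in> B \<Longrightarrow> v $ a = v $ b"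
  using assms unfolding blockwise_constant_def by blast+

lemma cluster_mat_carrier: "cluster_mat N k c \<in> carrier_mat N k"
  by (simp add: cluster_mat_def)

lemma cluster_mat_mult_vec_index:
  assumes \<P>: "partition_on {..<N} \<P>" and c: "bij_betw c {..<k} \<P>"
    and w: "w \<in> carrier_vec k" and l: "l < k" "i \<in> c l"
  shows "(cluster_mat N k c *\<^sub>v w) $ i = w $ l"
proof -
  have "c l \<in> \<P>" using bij_betwE[OF c] l by blast
  then have "i < N" using partition_onD1[OF \<P>] l by blast
  have unique: "l' = l" if l': "l' < k" "i \<in> c l'" for l'
  proof -
    have "c l' \<in> \<P>" using bij_betwE[OF c] l' by blast
    then have "c l' = c l"
      using disjointD[OF partition_onD2[OF \<P>] _ \<open>c l \<in> \<P>\<close>] l l' by blast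
    then show ?thesis
      using inj_onD[OF bij_betw_imp_inj_on[OF c]] l l' by simp
  qed
  have clusters_of_i: "{l' \<in> {..<k}. i \<in> c l'} = {l}"
    using l unique by blast
  have "(cluster_mat N k c *\<^sub>v w) $ i = (\<Sum>l'\<in>{..<k}. (if i \<in> c l' then 1 else 0) * w $ l')"
    using \<open>i < N\<close> w by (simp add: cluster_mat_def scalar_prod_def atLeast0LessThan)
  also have "\<dots> = (\<Sum>l'\<in>{..<k}. if i \<in> c l' then w $ l' else 0)"
    by (rule sum.cong) simp_all
  also have "\<dots> = (\<Sum>l'\<in>{l' \<in> {..<k}. i \<in> c l'}. w $ l')"
    by (rule sum.inter_filter[symmetric]) simp
  also have "\<dots> = w $ l"
    unfolding clusters_of_i by simp
  finally show ?thesis .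
qed

lemma col_space_cluster_mat:
  assumes \<P>: "partition_on {..<N} \<P>" and c: "bij_betw c {..<k} \<P>"
  shows "col_space (cluster_mat N k c) = blockwise_constant N \<P>"
proof
  show "col_space (cluster_mat N k c) \<subseteq> blockwise_constant N \<P>"
  proof
    fix v assume "v \<in> col_space (cluster_mat N k c)"
    then obtain w where w: "w \<in> carrier_vec k" "v = cluster_mat N k c *\<^sub>v w"
      unfolding col_space_def cluster_mat_def by auto
    have "v \<in> carrier_vec N"
      using mult_mat_vec_carrier[OF cluster_mat_carrier w(1)] w(2) by simp
    then show "v \<in> blockwise_constant N \<P>"
    proof (rule blockwise_constantI)
      fix B a b assume B: "B \<in> \<P>" "a \<in> B" "b \<in> B"
      obtain l where l: "l < k" "B = c l"
        using B unfolding bij_betw_imp_surj_on[OF c, symmetric] by blast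
      then have "v $ a = w $ l" "v $ b = w $ l"
        using B w(2) cluster_mat_mult_vec_index[OF \<P> c w(1) l(1)] by simp_all
      then show "v $ a = v $ b" by simp
    qed
  qed
  show "blockwise_constant N \<P> \<subseteq> col_space (cluster_mat N k c)"
  proof
    fix v assume v: "v \<in> blockwise_constant N \<P>"
    define w where "w = vec k (\<lambda>l. v $ (SOME a. a \<in> c l))"
    have entries: "v $ i = (cluster_mat N k c *\<^sub>v w) $ i" if "i < N" for i
    proof -
      have "i \<in> \<Union>\<P>"
        using that partition_onD1[OF \<P>] by blast
      then obtain B where "B \<in> \<P>" "i \<in> B"
        by blast
      then obtain l where l: "l < k" "i \<in> c l"
        unfolding bij_betw_imp_surj_on[OF c, symmetric] by blast
      have "c l \<in> \<P>" "(SOME a. a \<in> c l) \<in> c l"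
        using bij_betwE[OF c] l someI[of "\<lambda>a. a \<in> c l"] by blast+
      then have "v $ i = v $ (SOME a. a \<in> c l)"
        using blockwise_constantD(2)[OF v] l by blast
      also have "\<dots> = w $ l"
        using l by (simp add: w_def)
      also have "\<dots> = (cluster_mat N k c *\<^sub>v w) $ i"
        using cluster_mat_mult_vec_index[OF \<P> c _ l] by (simp add: w_def)
      finally show ?thesis .
    qed
    have "dim_vec v = N" "dim_vec (cluster_mat N k c *\<^sub>v w) = N"
      using blockwise_constantD(1)[OF v] by (simp_all add: cluster_mat_def)
    then have "v = cluster_mat N k c *\<^sub>v w"
      using entries by (intro eq_vecI) simp_all
    moreover have "w \<in> carrier_vec (dim_col (cluster_mat N k c))"
      unfolding w_def cluster_mat_def by simp
    ultimately show "v \<in> col_space (cluster_mat N k c)"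
      unfolding col_space_def by blast
  qed
qed

definition fixed_vecs :: "nat \<Rightarrow> real mat set \<Rightarrow> real vec set" where
  "fixed_vecs N S = {v \<in> carrier_vec N. \<forall>P\<in>S. P *\<^sub>v v = v}"

lemma fixed_vecs_eq_blockwise_constant:
  assumes S: "perm_mat_group N S"
  shows "fixed_vecs N S = blockwise_constant N (orbit N S ` {..<N})"
proof
  show "fixed_vecs N S \<subseteq> blockwise_constant N (orbit N S ` {..<N})"
  proof
    fix v assume v: "v \<in> fixed_vecs N S"
    then have vN: "v \<in> carrier_vec N" unfolding fixed_vecs_def by simp
    have const: "v $ a = v $ m" if m: "m < N" "a \<in> orbit N S m" for a m
    proof -
      obtain P where P: "P \<in> S" "a < N" "P $$ (a,m) = 1"
        using m unfolding orbit_def by blast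
      then have "v $ a = (P *\<^sub>v v) $ a"
        using v unfolding fixed_vecs_def by simp
      also have "\<dots> = v $ m"
        using perm_mat_mult_vec_index[OF perm_mat_groupD(1)[OF S P(1)] vN P(2) m(1) P(3)] .
      finally show ?thesis .
    qed
    show "v \<in> blockwise_constant N (orbit N S ` {..<N})"
    proof (rule blockwise_constantI[OF vN])
      fix B a b assume "B \<in> orbit N S ` {..<N}" "a \<in> B" "b \<in> B"
      then obtain m where "m < N" "a \<in> orbit N S m" "b \<in> orbit N S m" by blast
      then show "v $ a = v $ b" using const[of m a] const[of m b] by simp
    qed
  qed
  show "blockwise_constant N (orbit N S ` {..<N}) \<subseteq> fixed_vecs N S"
  proof
    fix v assume v: "v \<in> blockwise_constant N (orbit N S ` {..<N})"
    note vN = blockwise_constantD(1)[OF v]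
    have "P *\<^sub>v v = v" if "P \<in> S" for P
    proof -
      have P: "is_perm_mat N P" using perm_mat_groupD(1)[OF S that] .
      have "(P *\<^sub>v v) $ i = v $ i" if "i < N" for i
      proof -
        obtain a where a: "a < N" "P $$ (i,a) = 1"
          using is_perm_mat_row_one[OF P \<open>i < N\<close>] .
        then have "i \<in> orbit N S a"
          using \<open>P \<in> S\<close> \<open>i < N\<close> unfolding orbit_def by blast
        then have "v $ a = v $ i"
          using blockwise_constantD(2)[OF v _ orbit_refl[OF S a(1)]] a(1) by blast
        then show ?thesis
          using perm_mat_mult_vec_index[OF P vN \<open>i < N\<close> a] by simp
      qed
      then show ?thesis
        using is_perm_mat_carrier[OF P] vN by (intro eq_vecI) simp_all
    qed
    then show "v \<in> fixed_vecs N S"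
      using vN unfolding fixed_vecs_def by blast
  qed
qed

lemma commuting_mat_fixed_vecs:
  assumes S: "\<forall>P\<in>S. P \<in> carrier_mat N N \<and> P * X = X * P" and X: "X \<in> carrier_mat N N"
    and v: "v \<in> fixed_vecs N S"
  shows "X *\<^sub>v v \<in> fixed_vecs N S"
proof -
  have "P *\<^sub>v (X *\<^sub>v v) = X *\<^sub>v v" if "P \<in> S" for P
  proof -
    have P: "P \<in> carrier_mat N N" "P * X = X * P" using S that by auto
    have vN: "v \<in> carrier_vec N" using v unfolding fixed_vecs_def by simp
    have "P *\<^sub>v (X *\<^sub>v v) = (P * X) *\<^sub>v v"
      by (rule assoc_mult_mat_vec[OF P(1) X vN, symmetric])
    also have "\<dots> = X *\<^sub>v (P *\<^sub>v v)"
      unfolding P(2) by (rule assoc_mult_mat_vec[OF X P(1) vN])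
    also have "\<dots> = X *\<^sub>v v"
      using v that unfolding fixed_vecs_def by simp
    finally show ?thesis .
  qed
  then show ?thesis using X v unfolding fixed_vecs_def by simp
qed

lemma perm_mat_group_commute_transpose:
  assumes S: "perm_mat_group N S" and "\<forall>P\<in>S. P * X = X * P" and X: "X \<in> carrier_mat N N"
  shows "\<forall>P\<in>S. P * X\<^sup>T = X\<^sup>T * P"
proof
  fix P assume "P \<in> S"
  then have P: "P \<in> carrier_mat N N" "P\<^sup>T \<in> S"
    using perm_mat_groupD(1,4)[OF S] is_perm_mat_carrier by auto
  then have "P\<^sup>T * X = X * P\<^sup>T" using assms(2) by blast
  then have "(P\<^sup>T * X)\<^sup>T = (X * P\<^sup>T)\<^sup>T" by simp
  then show "P * X\<^sup>T = X\<^sup>T * P"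
    using P X by (simp add: transpose_mult[of _ N N _ N])
qed

section \<open>Block diagonalisation by an invariant subspace\<close>

lemma col_cols_first:
  assumes "T \<in> carrier_mat N n" "i < k" "k \<le> n"
  shows "col (cols_first k T) i = col T i"
  using assms by (intro eq_vecI) (simp_all add: cols_first_def)

lemma col_mem_col_space_cols_first:
  assumes T: "T \<in> carrier_mat N n" and "i < k" "k \<le> n"
  shows "col T i \<in> col_space (cols_first k T)"
proof -
  have C: "cols_first k T \<in> carrier_mat N k"
    using T by (simp add: cols_first_def)
  have "cols_first k T *\<^sub>v unit_vec k i = col (cols_first k T) i"
    using col_mult2[OF C one_carrier_mat \<open>i < k\<close>] C \<open>i < k\<close> by (simp add: col_one)
  also have "\<dots> = col T i"
    using C assms by (simp add: col_cols_first)
  finally show ?thesis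
    unfolding col_space_def using C by (auto intro!: exI[of _ "unit_vec k i"])
qed

lemma orthogonal_col_cols_first:
  assumes T: "T \<in> carrier_mat N N" and orth: "T\<^sup>T * T = 1\<^sub>m N"
    and "k \<le> j" "j < N" and w: "w \<in> carrier_vec k"
  shows "col T j \<bullet> (cols_first k T *\<^sub>v w) = 0"
proof -
  have C: "cols_first k T \<in> carrier_mat N k"
    using T by (simp add: cols_first_def)
  have colTj: "col T j \<in> carrier_vec N"
    using T by (simp add: carrier_vecI)
  have "(cols_first k T)\<^sup>T *\<^sub>v col T j = 0\<^sub>v k"
  proof (rule eq_vecI)
    fix l assume "l < dim_vec (0\<^sub>v k :: real vec)"
    then have "l < k" by simp
    then have "((cols_first k T)\<^sup>T *\<^sub>v col T j) $ l = (T\<^sup>T * T) $$ (l,j)"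
      using C T assms(3,4) by (simp add: col_cols_first)
    also have "\<dots> = 0"
      using orth \<open>l < k\<close> assms(3,4) by simp
    finally show "((cols_first k T)\<^sup>T *\<^sub>v col T j) $ l = 0\<^sub>v k $ l"
      using \<open>l < k\<close> by simp
  qed (use C in simp)
  then show ?thesis
    using transpose_vec_mult_scalar[OF C w colTj] w by simp
qed

lemma conj_lower_block_zero:
  assumes T: "T \<in> carrier_mat N N" and orth: "T\<^sup>T * T = 1\<^sub>m N" and X: "X \<in> carrier_mat N N"
    and inv: "\<forall>v \<in> col_space (cols_first k T). X *\<^sub>v v \<in> col_space (cols_first k T)"
    and "i < k" "k \<le> j" "j < N"
  shows "(T\<^sup>T * X * T) $$ (j,i) = 0"
proof -
  have "i < N" using assms by simp
  have "X *\<^sub>v col T i \<in> col_space (cols_first k T)"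
    using inv col_mem_col_space_cols_first[OF T \<open>i < k\<close>] assms(6,7) by simp
  then obtain w where w: "w \<in> carrier_vec k" "X *\<^sub>v col T i = cols_first k T *\<^sub>v w"
    unfolding col_space_def cols_first_def by auto
  have "(T\<^sup>T * X * T) $$ (j,i) = (T\<^sup>T * (X * T)) $$ (j,i)"
    using assoc_mult_mat[of "T\<^sup>T" N N X N T N] T X by simp
  also have "\<dots> = row T\<^sup>T j \<bullet> col (X * T) i"
    using T X \<open>i < N\<close> \<open>j < N\<close> by (intro index_mult_mat(1)) simp_all
  also have "\<dots> = col T j \<bullet> (X *\<^sub>v col T i)"
    unfolding col_mult2[OF X T \<open>i < N\<close>] using T \<open>j < N\<close> by simp
  also have "\<dots> = 0"
    unfolding w(2) by (rule orthogonal_col_cols_first[OF T orth assms(6,7) w(1)])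
  finally show ?thesis .
qed

lemma block_diag_splitI:
  assumes B: "B \<in> carrier_mat N N" and "k \<le> N"
    and zero: "\<And>i j. i < k \<Longrightarrow> k \<le> j \<Longrightarrow> j < N \<Longrightarrow> B $$ (j,i) = 0 \<and> B $$ (i,j) = 0"
  shows "block_diag_split N k B"
  unfolding block_diag_split_def
proof (intro exI conjI)
  let ?B1 = "mat k k (\<lambda>(i,j). B $$ (i,j))"
  let ?B2 = "mat (N-k) (N-k) (\<lambda>(i,j). B $$ (i+k,j+k))"
  show "?B1 \<in> carrier_mat k k" "?B2 \<in> carrier_mat (N-k) (N-k)" by auto
  show "B = four_block_mat ?B1 (0\<^sub>m k (N-k)) (0\<^sub>m (N-k) k) ?B2"
  proof (rule eq_matI)
    fix i j assume "i < dim_row (four_block_mat ?B1 (0\<^sub>m k (N-k)) (0\<^sub>m (N-k) k) ?B2)"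
      "j < dim_col (four_block_mat ?B1 (0\<^sub>m k (N-k)) (0\<^sub>m (N-k) k) ?B2)"
    then have "i < N" "j < N" using \<open>k \<le> N\<close> by auto
    then show "B $$ (i,j) = four_block_mat ?B1 (0\<^sub>m k (N-k)) (0\<^sub>m (N-k) k) ?B2 $$ (i,j)"
      using \<open>k \<le> N\<close> zero[of i j] zero[of j i] by auto
  qed (use B \<open>k \<le> N\<close> in auto)
qed

lemma block_diag_split_conj:
  assumes T: "T \<in> carrier_mat N N" and orth: "T\<^sup>T * T = 1\<^sub>m N" and "k \<le> N"
    and X: "X \<in> carrier_mat N N"
    and inv: "\<forall>v \<in> col_space (cols_first k T). X *\<^sub>v v \<in> col_space (cols_first k T)"
    and inv_transpose: "\<forall>v \<in> col_space (cols_first k T). X\<^sup>T *\<^sub>v v \<in> col_space (cols_first k T)"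
  shows "block_diag_split N k (T\<^sup>T * X * T)"
proof (rule block_diag_splitI)
  show "T\<^sup>T * X * T \<in> carrier_mat N N" using T X by simp
  show "k \<le> N" by fact
  fix i j assume ij: "i < k" "k \<le> j" "j < N"
  have "(T\<^sup>T * X * T)\<^sup>T = T\<^sup>T * (T\<^sup>T * X)\<^sup>T"
    using transpose_mult[of "T\<^sup>T * X" N N T N] T X by simp
  also have "\<dots> = T\<^sup>T * X\<^sup>T * T"
    using transpose_mult[of "T\<^sup>T" N N X N] assoc_mult_mat[of "T\<^sup>T" N N "X\<^sup>T" N T N] T X by simp
  finally have "(T\<^sup>T * X * T) $$ (i,j) = (T\<^sup>T * X\<^sup>T * T) $$ (j,i)"
    using index_transpose_mat(1)[of j "T\<^sup>T * X * T" i] T X ij \<open>k \<le> N\<close> by simp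
  then show "(T\<^sup>T * X * T) $$ (j,i) = 0 \<and> (T\<^sup>T * X * T) $$ (i,j) = 0"
    using conj_lower_block_zero[OF T orth X inv ij] conj_lower_block_zero[OF T orth _ inv_transpose ij] X
    by simp
qed

lemma block_diag_split_commuting:
  assumes S: "perm_mat_group N S" and commute: "\<forall>P\<in>S. P * X = X * P" and X: "X \<in> carrier_mat N N"
    and c: "bij_betw c {..<k} (orbit N S ` {..<N})"
    and T: "T \<in> carrier_mat N N" and orth: "T\<^sup>T * T = 1\<^sub>m N"
    and span: "col_space (cols_first k T) = col_space (cluster_mat N k c)"
  shows "block_diag_split N k (T\<^sup>T * X * T)"
proof -
  have "k = card (orbit N S ` {..<N})"
    using bij_betw_same_card[OF c] by simp
  also have "\<dots> \<le> N"
    using card_image_le[of "{..<N}" "orbit N S"] by simp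
  finally have "k \<le> N" .
  have V: "col_space (cols_first k T) = fixed_vecs N S"
    unfolding span col_space_cluster_mat[OF partition_on_orbits[OF S] c]
      fixed_vecs_eq_blockwise_constant[OF S] ..
  have carrier: "\<forall>P\<in>S. P \<in> carrier_mat N N"
    using perm_mat_groupD(1)[OF S] is_perm_mat_carrier by blast
  have "\<forall>v \<in> col_space (cols_first k T). X *\<^sub>v v \<in> col_space (cols_first k T)"
    unfolding V using commuting_mat_fixed_vecs[OF _ X] carrier commute by blast
  moreover have "\<forall>v \<in> col_space (cols_first k T). X\<^sup>T *\<^sub>v v \<in> col_space (cols_first k T)"
    unfolding V using commuting_mat_fixed_vecs[OF _ transpose_carrier_mat[THEN iffD2, OF X]] carrier
      perm_mat_group_commute_transpose[OF S commute X] by blast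
  ultimately show ?thesis
    using block_diag_split_conj[OF T orth \<open>k \<le> N\<close> X] by blast
qed

theorem proposition2:
  fixes N kT kB :: nat and A L W :: "real mat" and \<kappa> :: "nat \<Rightarrow> real"
    and cT cB :: "nat \<Rightarrow> nat set" and TT TB :: "real mat"
  assumes "N \<ge> 1"
    and "A \<in> carrier_mat N N" and "A\<^sup>T = A"
    and "\<forall>i<N. \<forall>j<N. A $$ (i,j) = 0 \<or> A $$ (i,j) = 1"
    and "W \<in> carrier_mat N N" and "W\<^sup>T = W" and "\<forall>i<N. \<forall>j<N. W $$ (i,j) \<ge> 0"
    and "L = laplacian N W"
    and "\<forall>i<N. \<kappa> i = 0 \<or> \<kappa> i = 1"
    and "bij_betw cT {..<kT} (clusters_top N (sym_group N A L (diag_K N \<kappa>)))"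
    and "bij_betw cB {..<kB} (clusters_bot N (sym_group N A L (diag_K N \<kappa>)))"
    and "ordered_eigenbasis N kT (cluster_mat N kT cT) (proj_mat (cluster_mat N kT cT)) TT"
    and "ordered_eigenbasis N kB (cluster_mat N kB cB) (proj_mat (cluster_mat N kB cB)) TB"
  shows "block_diag_split N kT (TT\<^sup>T * A * TT) \<and> block_diag_split N kB (TB\<^sup>T * L * TB)"
proof -
  let ?G = "sym_group N A L (diag_K N \<kappa>)"
  have A: "A \<in> carrier_mat N N" by fact
  have L: "L \<in> carrier_mat N N" using \<open>L = laplacian N W\<close> by (simp add: laplacian_def)
  have K: "diag_K N \<kappa> \<in> carrier_mat N N" by (simp add: diag_K_def)
  have commute: "\<forall>P\<in>fst ` ?G. P * A = A * P" "\<forall>P\<in>snd ` ?G. P * L = L * P"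
    unfolding sym_group_def by auto
  have "bij_betw cT {..<kT} (orbit N (fst ` ?G) ` {..<N})"
    "bij_betw cB {..<kB} (orbit N (snd ` ?G) ` {..<N})"
    using assms(10,11) unfolding clusters_top_def clusters_bot_def orbit_top_eq orbit_bot_eq .
  moreover have "TT \<in> carrier_mat N N" "TT\<^sup>T * TT = 1\<^sub>m N"
    "col_space (cols_first kT TT) = col_space (cluster_mat N kT cT)"
    "TB \<in> carrier_mat N N" "TB\<^sup>T * TB = 1\<^sub>m N"
    "col_space (cols_first kB TB) = col_space (cluster_mat N kB cB)"
    using assms(12,13) unfolding ordered_eigenbasis_def by auto
  ultimately show ?thesis
    using block_diag_split_commuting[OF perm_mat_group_sym_group(1)[OF A L K] commute(1) A]
      block_diag_split_commuting[OF perm_mat_group_sym_group(2)[OF A L K] commute(2) L]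
    by blast
qed

end
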